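(* Let $n\ge1$ and let $f,g_1$ be as defined in the context. The set $\{v\in\mathbb{R}^{n+1}: g_1(v)=0,\ \sum_i v_i=0,\ \sum_i v_i^2=1\}$ equals $\{v\in\mathbb{R}^{n+1}:\sigma_1(v)=0,\ \sigma_2(v)=-\tfrac12,\ \sigma_3(v)=0\}$, and on this set $f=\frac{9(n-1)}{8(n+1)}-\sigma_4$. Consequently, finding the critical points (local extrema) of the minimization problem $\min f$ subject to $g_1=0$, $\sum_i v_i=0$, $\sum_i v_i^2=1$ is equivalent to finding the critical points of the problem $\max\sigma_4$ subject to $\sigma_1=0$, $\sigma_2=-\frac12$, $\sigma_3=0$.
   Context: For $v=(v_1,\dots,v_{n+1})$, $\sigma_k$ denotes the $k$-th elementary symmetric polynomial in $v_1,\dots,v_{n+1}$ ($\sigma_k=0$ for $k>n+1$), and $P=\sum_j v_j^2$. Define $u_i(v)=\frac{2+P}{2(n+1)}-\frac{v_i^2}{2}$, $\tilde u_i(v)=\frac{3P}{2(n+1)}-\frac{v_i^2}{2}$, $f(v)=\sum_i u_i(v)^2-2u_{n+1}(v)+1-v_{n+1}^2$ and $g_1(v)=\sum_i\tilde u_i(v)v_i$. The minimization problem describes the squared radii of circumscribing cylinders of the regular simplex with vertices $e_1,\dots,e_{n+1}$ in the hyperplane $\sum x_i=1$ of $\mathbb{R}^{n+1}$, with axis direction $v$. *)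

theory Defs
  imports Complex_Main
begin

text \<open>Vectors v in R^(n+1) are represented as functions nat => real; only the
  coordinates v 1, ..., v (n+1) are relevant.\<close>

definition esym :: "nat \<Rightarrow> nat \<Rightarrow> (nat \<Rightarrow> real) \<Rightarrow> real" where
  "esym n k v = (\<Sum>S \<in> {S. S \<subseteq> {1..n+1} \<and> card S = k}. \<Prod>i\<in>S. v i)"

definition Psq :: "nat \<Rightarrow> (nat \<Rightarrow> real) \<Rightarrow> real" where
  "Psq n v = (\<Sum>j=1..n+1. (v j)^2)"

definition uu :: "nat \<Rightarrow> (nat \<Rightarrow> real) \<Rightarrow> nat \<Rightarrow> real" where
  "uu n v i = (2 + Psq n v) / (2 * (real n + 1)) - (v i)^2 / 2"

definition ut :: "nat \<Rightarrow> (nat \<Rightarrow> real) \<Rightarrow> nat \<Rightarrow> real" where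
  "ut n v i = 3 * Psq n v / (2 * (real n + 1)) - (v i)^2 / 2"

definition ff :: "nat \<Rightarrow> (nat \<Rightarrow> real) \<Rightarrow> real" where
  "ff n v = (\<Sum>i=1..n+1. (uu n v i)^2) - 2 * uu n v (n+1) + 1 - (v (n+1))^2"

definition g1 :: "nat \<Rightarrow> (nat \<Rightarrow> real) \<Rightarrow> real" where
  "g1 n v = (\<Sum>i=1..n+1. ut n v i * v i)"

definition loc_min_on :: "nat \<Rightarrow> ((nat \<Rightarrow> real) \<Rightarrow> real) \<Rightarrow> (nat \<Rightarrow> real) set \<Rightarrow> (nat \<Rightarrow> real) \<Rightarrow> bool" where
  "loc_min_on n F S v \<longleftrightarrow> v \<in> S \<and>
     (\<exists>e>0. \<forall>w\<in>S. (\<forall>i\<in>{1..n+1}. \<bar>w i - v i\<bar> < e) \<longrightarrow> F v \<le> F w)"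

definition loc_max_on :: "nat \<Rightarrow> ((nat \<Rightarrow> real) \<Rightarrow> real) \<Rightarrow> (nat \<Rightarrow> real) set \<Rightarrow> (nat \<Rightarrow> real) \<Rightarrow> bool" where
  "loc_max_on n F S v \<longleftrightarrow> v \<in> S \<and>
     (\<exists>e>0. \<forall>w\<in>S. (\<forall>i\<in>{1..n+1}. \<bar>w i - v i\<bar> < e) \<longrightarrow> F w \<le> F v)"

end

theory Submission
  imports Defs
begin

(* All functions involved are symmetric in v, so they can be rewritten in the power sums
   p_k = sum_i v_i^k: g1 = 3 p_2 p_1 / (2(n+1)) - p_3 / 2, and f = 1 + p_4/4 - (2 + p_2)^2 / (4(n+1))
   because the terms in v_(n+1) cancel. By Newton's identities the constraints p_1 = 0, p_2 = 1,
   g1 = 0 say exactly sigma_1 = 0, sigma_2 = -1/2, sigma_3 = 0, and then sigma_4 = 1/8 - p_4/4.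
   So on the constraint set f is a constant minus sigma_4, which exchanges local minima and maxima. *)

definition esym_on :: "'a set \<Rightarrow> nat \<Rightarrow> ('a \<Rightarrow> real) \<Rightarrow> real" where
  "esym_on A k v = (\<Sum>S \<in> {S. S \<subseteq> A \<and> card S = k}. \<Prod>i\<in>S. v i)"

definition power_sum :: "'a set \<Rightarrow> nat \<Rightarrow> ('a \<Rightarrow> real) \<Rightarrow> real" where
  "power_sum A k v = (\<Sum>i\<in>A. v i ^ k)"

lemma esym_eq_esym_on: "esym n k v = esym_on {1..n+1} k v"
  by (simp add: esym_def esym_on_def)

lemma esym_on_0 [simp]: "finite A \<Longrightarrow> esym_on A 0 v = 1"
proof -
  assume "finite A"
  then have "{S. S \<subseteq> A \<and> card S = 0} = {{}}" by (auto dest: finite_subset)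
  then show ?thesis by (simp add: esym_on_def)
qed

lemma esym_on_empty [simp]: "0 < k \<Longrightarrow> esym_on {} k v = 0"
  by (simp add: esym_on_def)

lemma esym_on_insert:
  assumes "finite A" "a \<notin> A" "0 < k"
  shows "esym_on (insert a A) k v = esym_on A k v + v a * esym_on A (k - 1) v"
proof -
  let ?C = "\<lambda>k. {S. S \<subseteq> A \<and> card S = k}"
  have C_fin: "finite S" "a \<notin> S" if "S \<in> ?C j" for S j
    using that assms(1,2) finite_subset by auto
  have split: "{S. S \<subseteq> insert a A \<and> card S = k} = ?C k \<union> insert a ` ?C (k - 1)"
  proof (intro set_eqI iffI)
    fix S assume S: "S \<in> {S. S \<subseteq> insert a A \<and> card S = k}"
    show "S \<in> ?C k \<union> insert a ` ?C (k - 1)"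
    proof (cases "a \<in> S")
      case True
      have "finite S" using S assms(1) finite_subset by blast
      then have "S - {a} \<in> ?C (k - 1)" using S True by (auto simp: card_Diff_singleton)
      moreover have "S = insert a (S - {a})" using True by blast
      ultimately show ?thesis by blast
    qed (use S in blast)
  next
    fix S assume "S \<in> ?C k \<union> insert a ` ?C (k - 1)"
    then show "S \<in> {S. S \<subseteq> insert a A \<and> card S = k}"
    proof
      assume "S \<in> insert a ` ?C (k - 1)"
      then obtain T where "T \<in> ?C (k - 1)" "S = insert a T" by blast
      with C_fin[of T] assms(3) show ?thesis by auto
    qed blast
  qed
  have inj: "inj_on (insert a) (?C (k - 1))"
  proof (rule inj_onI)
    fix S T assume "S \<in> ?C (k - 1)" "T \<in> ?C (k - 1)" "insert a S = insert a T"
    with C_fin show "S = T" by (metis insert_ident)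
  qed
  have "esym_on (insert a A) k v = esym_on A k v + (\<Sum>S\<in>insert a ` ?C (k - 1). \<Prod>i\<in>S. v i)"
    unfolding esym_on_def split
  proof (rule sum.union_disjoint)
    show "finite (?C k)" "finite (insert a ` ?C (k - 1))"
      using assms(1) by simp_all
    show "?C k \<inter> insert a ` ?C (k - 1) = {}"
      using assms(2) by blast
  qed
  also have "(\<Sum>S\<in>insert a ` ?C (k - 1). \<Prod>i\<in>S. v i) = v a * esym_on A (k - 1) v"
    unfolding esym_on_def sum.reindex[OF inj] sum_distrib_left comp_def
  proof (rule sum.cong)
    fix S assume "S \<in> ?C (k - 1)"
    from C_fin[OF this] show "(\<Prod>i\<in>insert a S. v i) = v a * (\<Prod>i\<in>S. v i)"
      by (rule prod.insert)
  qed simp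
  finally show ?thesis .
qed

lemma power_sum_insert:
  "finite A \<Longrightarrow> a \<notin> A \<Longrightarrow> power_sum (insert a A) k v = v a ^ k + power_sum A k v"
  by (simp add: power_sum_def)

lemma newton_identities:
  fixes v :: "'a \<Rightarrow> real"
  assumes "finite A"
  defines "p \<equiv> \<lambda>k. power_sum A k v"
  shows "esym_on A 1 v = p 1"
    and "esym_on A 2 v = (p 1 ^ 2 - p 2) / 2"
    and "esym_on A 3 v = (p 1 ^ 3 - 3 * p 1 * p 2 + 2 * p 3) / 6"
    and "esym_on A 4 v = (p 1 ^ 4 - 6 * p 1 ^ 2 * p 2 + 3 * p 2 ^ 2 + 8 * p 1 * p 3 - 6 * p 4) / 24"
  unfolding p_def using assms(1)
proof (induction A rule: finite_induct)
  case (insert a A)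
  show "esym_on (insert a A) 1 v = power_sum (insert a A) 1 v"
    and "esym_on (insert a A) 2 v = (power_sum (insert a A) 1 v ^ 2 - power_sum (insert a A) 2 v) / 2"
    and "esym_on (insert a A) 3 v = (power_sum (insert a A) 1 v ^ 3
           - 3 * power_sum (insert a A) 1 v * power_sum (insert a A) 2 v + 2 * power_sum (insert a A) 3 v) / 6"
    and "esym_on (insert a A) 4 v = (power_sum (insert a A) 1 v ^ 4
           - 6 * power_sum (insert a A) 1 v ^ 2 * power_sum (insert a A) 2 v
           + 3 * power_sum (insert a A) 2 v ^ 2 + 8 * power_sum (insert a A) 1 v * power_sum (insert a A) 3 v
           - 6 * power_sum (insert a A) 4 v) / 24"
    by (simp_all add: esym_on_insert power_sum_insert insert flip: One_nat_def) algebra+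
qed (simp_all add: power_sum_def)

lemma Psq_eq_power_sum: "Psq n v = power_sum {1..n+1} 2 v"
  by (simp add: Psq_def power_sum_def)

lemma g1_eq_power_sums:
  "g1 n v = 3 * Psq n v / (2 * (real n + 1)) * power_sum {1..n+1} 1 v - power_sum {1..n+1} 3 v / 2"
proof -
  define a where "a = 3 * Psq n v / (2 * (real n + 1))"
  have "g1 n v = (\<Sum>i=1..n+1. a * v i - v i ^ 3 / 2)"
    unfolding g1_def ut_def a_def[symmetric]
    by (intro sum.cong) (simp_all add: algebra_simps power3_eq_cube power2_eq_square)
  also have "\<dots> = a * power_sum {1..n+1} 1 v - power_sum {1..n+1} 3 v / 2"
    by (simp only: power_sum_def sum_subtractf sum_distrib_left sum_divide_distrib power_one_right)
  finally show ?thesis unfolding a_def .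
qed

lemma ff_eq_power_sums:
  "ff n v = 1 + power_sum {1..n+1} 4 v / 4 - (2 + Psq n v)^2 / (4 * (real n + 1))"
proof -
  define N where "N = real n + 1"
  define c where "c = (2 + Psq n v) / (2 * N)"
  have "N > 0" by (simp add: N_def)
  have "(\<Sum>i=1..n+1. (uu n v i)^2) = (\<Sum>i=1..n+1. c^2 - c * v i ^ 2 + v i ^ 4 / 4)"
    unfolding uu_def N_def[symmetric] c_def[symmetric]
    by (intro sum.cong) (simp_all add: power2_eq_square power4_eq_xxxx algebra_simps)
  also have "\<dots> = N * c^2 - c * Psq n v + power_sum {1..n+1} 4 v / 4"
    by (simp only: Psq_def power_sum_def sum.distrib sum_subtractf sum_distrib_left
        sum_divide_distrib sum_constant card_atLeastAtMost) (simp add: N_def)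
  moreover have "uu n v (n+1) = c - v (n+1)^2 / 2"
    by (simp add: uu_def c_def N_def)
  ultimately have "ff n v = N * c^2 - c * (Psq n v + 2) + power_sum {1..n+1} 4 v / 4 + 1"
    by (simp add: ff_def algebra_simps)
  also have "\<dots> = 1 + power_sum {1..n+1} 4 v / 4 - (2 + Psq n v)^2 / (4 * N)"
    using \<open>N > 0\<close> by (simp add: c_def field_simps power2_eq_square)
  finally show ?thesis by (simp add: N_def)
qed

lemma constraints_iff_esym:
  "(g1 n v = 0 \<and> (\<Sum>i=1..n+1. v i) = 0 \<and> Psq n v = 1)
     \<longleftrightarrow> (esym n 1 v = 0 \<and> esym n 2 v = -1/2 \<and> esym n 3 v = 0)"
proof -
  define p where "p k = power_sum {1..n+1} k v" for k
  have "(\<Sum>i=1..n+1. v i) = p 1" "Psq n v = p 2"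
    "g1 n v = 3 * p 2 / (2 * (real n + 1)) * p 1 - p 3 / 2"
    by (simp_all add: p_def power_sum_def Psq_eq_power_sum g1_eq_power_sums)
  moreover have "esym n 1 v = p 1" "esym n 2 v = (p 1 ^ 2 - p 2) / 2"
    "esym n 3 v = (p 1 ^ 3 - 3 * p 1 * p 2 + 2 * p 3) / 6"
    using newton_identities(1-3)[of "{1..n+1}" v] by (simp_all add: esym_eq_esym_on p_def)
  ultimately show ?thesis
    by auto
qed

lemma ff_eq_on_esym_constraints:
  assumes "esym n 1 v = 0" "esym n 2 v = -1/2" "esym n 3 v = 0"
  shows "ff n v = 9 * (real n - 1) / (8 * (real n + 1)) - esym n 4 v"
proof -
  define p where "p k = power_sum {1..n+1} k v" for k
  have "p 1 = 0" "p 2 = 1" "p 3 = 0"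
    using assms newton_identities(1-3)[of "{1..n+1}" v] by (simp_all add: esym_eq_esym_on p_def)
  have "ff n v = 1 + p 4 / 4 - 9 / (4 * (real n + 1))"
    using \<open>p 2 = 1\<close> by (simp add: ff_eq_power_sums Psq_eq_power_sum p_def)
  also have "\<dots> = 9 * (real n - 1) / (8 * (real n + 1)) - (1/8 - p 4 / 4)"
    by (simp add: field_simps)
  also have "1/8 - p 4 / 4 = esym n 4 v"
    using \<open>p 1 = 0\<close> \<open>p 2 = 1\<close> \<open>p 3 = 0\<close> newton_identities(4)[of "{1..n+1}" v]
    by (simp add: esym_eq_esym_on p_def)
  finally show ?thesis .
qed

lemma loc_extrema_on_const_minus:
  assumes "\<And>w. w \<in> S \<Longrightarrow> F w = c - G w"
  shows "loc_min_on n F S v \<longleftrightarrow> loc_max_on n G S v"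
    and "loc_max_on n F S v \<longleftrightarrow> loc_min_on n G S v"
  using assms unfolding loc_min_on_def loc_max_on_def by auto

theorem mainTheorem9:
  fixes n :: nat
  assumes "n \<ge> 1"
  shows "{v. g1 n v = 0 \<and> (\<Sum>i=1..n+1. v i) = 0 \<and> Psq n v = 1}
           = {v. esym n 1 v = 0 \<and> esym n 2 v = -1/2 \<and> esym n 3 v = 0}
       \<and> (\<forall>v. esym n 1 v = 0 \<and> esym n 2 v = -1/2 \<and> esym n 3 v = 0 \<longrightarrow>
              ff n v = 9 * (real n - 1) / (8 * (real n + 1)) - esym n 4 v)
       \<and> (\<forall>v. loc_min_on n (ff n) {v. g1 n v = 0 \<and> (\<Sum>i=1..n+1. v i) = 0 \<and> Psq n v = 1} v
              \<longleftrightarrow> loc_max_on n (esym n 4) {v. esym n 1 v = 0 \<and> esym n 2 v = -1/2 \<and> esym n 3 v = 0} v)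
       \<and> (\<forall>v. loc_max_on n (ff n) {v. g1 n v = 0 \<and> (\<Sum>i=1..n+1. v i) = 0 \<and> Psq n v = 1} v
              \<longleftrightarrow> loc_min_on n (esym n 4) {v. esym n 1 v = 0 \<and> esym n 2 v = -1/2 \<and> esym n 3 v = 0} v)"
proof -
  let ?E = "{v. esym n 1 v = 0 \<and> esym n 2 v = -1/2 \<and> esym n 3 v = 0}"
  have sets_eq: "{v. g1 n v = 0 \<and> (\<Sum>i=1..n+1. v i) = 0 \<and> Psq n v = 1} = ?E"
    using constraints_iff_esym by blast
  have ff_on_E: "ff n w = 9 * (real n - 1) / (8 * (real n + 1)) - esym n 4 w" if "w \<in> ?E" for w
    using that ff_eq_on_esym_constraints by simp
  have extrema: "loc_min_on n (ff n) ?E v \<longleftrightarrow> loc_max_on n (esym n 4) ?E v"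
    "loc_max_on n (ff n) ?E v \<longleftrightarrow> loc_min_on n (esym n 4) ?E v" for v
    by (rule loc_extrema_on_const_minus, rule ff_on_E, assumption)+
  show ?thesis
    unfolding sets_eq using ff_on_E extrema by blast
qed

end
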